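(* Let $q$ be a prime power, let $h(x)\in\mathbb{F}_{q^6}[x]$, let $L(x)=\sum_i a_i x^{q^i}$ be a $q$-polynomial with all $a_i\in\mathbb{F}_q$, and let $\delta\in\mathbb{F}_{q^6}$. Write $w(x)=x^{q^2}-x^q+x+\delta$. Then the polynomial $$f(x)=h(w(x))^{q^4}+h(w(x))^{q^3}-h(w(x))^{q}-h(w(x))+L(x)$$ permutes $\mathbb{F}_{q^6}$ if and only if $L(x)$ permutes $\mathbb{F}_{q^6}$.
   Context: A polynomial permutes $\mathbb{F}_{q^6}$ if it induces a bijection of $\mathbb{F}_{q^6}$. *)

theory Defs
  imports "HOL-Computational_Algebra.Polynomial" "HOL-Computational_Algebra.Primes"
begin

definition prime_power :: "nat \<Rightarrow> bool" where
  "prime_power q \<longleftrightarrow> (\<exists>p k. prime p \<and> k > 0 \<and> q = p ^ k)"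

definition q_poly_eval :: "nat \<Rightarrow> 'a::comm_ring_1 list \<Rightarrow> 'a \<Rightarrow> 'a" where
  "q_poly_eval q as x = (\<Sum>i<length as. as ! i * x ^ (q ^ i))"

definition permutes_field :: "('a \<Rightarrow> 'a) \<Rightarrow> bool" where
  "permutes_field f \<longleftrightarrow> bij f"

end

theory Submission
  imports Defs "HOL-Number_Theory.Residues"
begin

text \<open>
  Let \<open>T x = x^(q^2) - x^q + x\<close> and \<open>\<psi> y = y^(q^4) + y^(q^3) - y^q - y\<close>. They are the
  \<open>q\<close>-associates of \<open>X^2 - X + 1\<close> and \<open>X^4 + X^3 - X - 1\<close>, whose product is \<open>X^6 - 1\<close>,
  so \<open>T \<circ> \<psi> = 0\<close> on \<open>F(q^6)\<close>; and \<open>L\<close>, having coefficients in \<open>F(q)\<close>, commutes with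
  \<open>T\<close>. Hence \<open>f x = \<psi> (h (T x + \<delta>)) + L x\<close> satisfies \<open>T \<circ> f = L \<circ> T\<close> and
  \<open>f (x + z) = f x + L z\<close> for \<open>z \<in> ker T\<close>. If \<open>L\<close> is injective, \<open>f a = f b\<close> gives
  first \<open>T a = T b\<close> and then \<open>L a = L b\<close>. Conversely, if \<open>f\<close> is bijective, then \<open>L\<close> is
  injective on the image of \<open>T\<close>; so every \<open>z \<in> ker L\<close> lies in \<open>ker T\<close>, whence
  \<open>f z = f 0\<close> and \<open>z = 0\<close>.
\<close>

lemma finite_field_power_card:
  fixes x :: "'a::{field,finite}"
  shows "x ^ card (UNIV :: 'a set) = x"
proof -
  have "card (UNIV :: 'a set) > 0"
    by (simp add: finite_UNIV_card_ge_0)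
  then obtain n where n: "card (UNIV :: 'a set) = Suc n"
    using gr0_implies_Suc by blast
  have "x ^ n = 1" if "x \<noteq> 0"
  proof -
    define P where "P = (\<Prod>y\<in>UNIV - {0::'a}. y)"
    have "(\<Prod>y\<in>UNIV - {0}. x * y) = P"
      unfolding P_def
      by (rule prod.reindex_bij_witness[of _ "\<lambda>y. y / x" "\<lambda>y. x * y"]) (use that in auto)
    then have "x ^ n * P = P"
      by (simp add: prod.distrib P_def card_Diff_singleton n)
    moreover have "P \<noteq> 0"
      by (simp add: P_def)
    ultimately show "x ^ n = 1"
      by simp
  qed
  then show ?thesis
    by (cases "x = 0") (simp_all add: n)
qed

lemma prime_CHAR_finite_field: "prime CHAR('a::{field,finite})"
  using prime_CHAR_semidom finite_imp_CHAR_pos by (metis finite_UNIV)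

lemma CHAR_power_if_card_eq_prime_power:
  assumes "prime_power q" and "card (UNIV :: 'a::{field,finite} set) = q ^ n"
  obtains k where "q = CHAR('a) ^ k"
proof -
  obtain p k where p: "prime p" and q: "q = p ^ k"
    using assms(1) unfolding prime_power_def by blast
  have "CHAR('a) dvd p ^ (k * n)"
    using CHAR_dvd_CARD[where 'a = 'a] assms(2) q by (simp add: power_mult)
  then have "CHAR('a) = p"
    using prime_CHAR_finite_field p prime_dvd_power primes_dvd_imp_eq by blast
  with q show thesis
    using that by blast
qed

lemma additive_power_CHAR_power:
  assumes "prime CHAR('a::comm_ring_1)" and "q = CHAR('a) ^ k"
  shows "additive (\<lambda>x::'a. x ^ (q ^ j))"
  by unfold_locales (simp add: freshmans_dream' assms power_mult flip: power_mult)

lemma additive_q_poly_eval: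
  fixes as :: "'a::comm_ring_1 list"
  assumes "\<And>i. additive (\<lambda>x::'a. x ^ (q ^ i))"
  shows "additive (q_poly_eval q as)"
proof
  fix x y :: 'a
  have "(x + y) ^ (q ^ i) = x ^ (q ^ i) + y ^ (q ^ i)" for i
    using additive.add[OF assms] .
  then show "q_poly_eval q as (x + y) = q_poly_eval q as x + q_poly_eval q as y"
    by (simp add: q_poly_eval_def distrib_left sum.distrib)
qed

lemma q_poly_eval_power_commute:
  fixes as :: "'a::comm_ring_1 list"
  assumes "additive (\<lambda>x::'a. x ^ q)" and "\<forall>c\<in>set as. c ^ q = c"
  shows "q_poly_eval q as (x ^ q) = q_poly_eval q as x ^ q"
proof -
  have "q_poly_eval q as x ^ q = (\<Sum>i<length as. (as ! i * x ^ (q ^ i)) ^ q)"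
    unfolding q_poly_eval_def using additive.sum[OF assms(1)] by simp
  also have "\<dots> = (\<Sum>i<length as. as ! i * (x ^ q) ^ (q ^ i))"
  proof (rule sum.cong)
    fix i assume "i \<in> {..<length as}"
    then have "as ! i ^ q = as ! i"
      using assms(2) by simp
    then show "(as ! i * x ^ (q ^ i)) ^ q = as ! i * (x ^ q) ^ (q ^ i)"
      by (simp add: power_mult_distrib mult.commute flip: power_mult)
  qed simp
  finally show ?thesis
    unfolding q_poly_eval_def by simp
qed

definition lin_quad :: "nat \<Rightarrow> 'a::comm_ring_1 \<Rightarrow> 'a" where
  "lin_quad q x = x ^ (q ^ 2) - x ^ q + x"

definition lin_quartic :: "nat \<Rightarrow> 'a::comm_ring_1 \<Rightarrow> 'a" where
  "lin_quartic q y = y ^ (q ^ 4) + y ^ (q ^ 3) - y ^ q - y"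

lemma additive_lin_quad:
  assumes "\<And>i. additive (\<lambda>x::'a::comm_ring_1. x ^ (q ^ i))"
  shows "additive (lin_quad q :: 'a \<Rightarrow> 'a)"
  using additive.add[OF assms(1)[of 1]] additive.add[OF assms(1)[of 2]]
  by unfold_locales (simp add: lin_quad_def)

lemma lin_quad_lin_quartic:
  fixes y :: "'a::comm_ring_1"
  assumes "\<And>i. additive (\<lambda>x::'a. x ^ (q ^ i))"
    and "y ^ (q ^ 6) = y"
  shows "lin_quad q (lin_quartic q y) = 0"
proof -
  have add: "(a + b) ^ (q ^ i) = a ^ (q ^ i) + b ^ (q ^ i)"
   and diff: "(a - b) ^ (q ^ i) = a ^ (q ^ i) - b ^ (q ^ i)" for a b :: 'a and i
    using additive.add[OF assms(1)] additive.diff[OF assms(1)] by blast+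
  have power_power: "(y ^ (q ^ i)) ^ (q ^ j) = y ^ (q ^ (i + j))" for i j
    by (simp add: power_add flip: power_mult)
  show ?thesis
    unfolding lin_quad_def lin_quartic_def
    using add[of _ _ 1] diff[of _ _ 1] power_power[of 1 1] power_power[of 1 2]
      power_power[of 3 1] power_power[of 3 2] power_power[of 4 1] power_power[of 4 2]
    by (simp add: add diff assms(2)) (simp add: power2_eq_square power3_eq_cube mult.assoc)
qed

lemma lin_quad_commute:
  assumes "additive L" and "\<And>x. L (x ^ q) = L x ^ q"
  shows "L (lin_quad q x) = lin_quad q (L x)"
proof -
  have "L (x ^ (q ^ 2)) = L x ^ (q ^ 2)"
    using assms(2)[of x] assms(2)[of "x ^ q"] by (simp add: power2_eq_square power_mult)
  then show ?thesis
    unfolding lin_quad_def by (simp add: additive.add[OF assms(1)] additive.diff[OF assms(1)] assms(2))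
qed

lemma inj_add_kernel_valued_if_inj:
  fixes T L G :: "'a::ab_group_add \<Rightarrow> 'a"
  assumes T: "additive T" and "inj L"
    and commute: "\<And>x. L (T x) = T (L x)" and kernel_valued: "\<And>w. T (G w) = 0"
  shows "inj (\<lambda>x. G (T x) + L x)"
proof (rule injI)
  fix a b assume eq: "G (T a) + L a = G (T b) + L b"
  have T_f: "T (G (T x) + L x) = L (T x)" for x
    by (simp add: additive.add[OF T] kernel_valued commute)
  have "L (T a) = L (T b)"
    using arg_cong[OF eq, of T] by (simp only: T_f)
  then have "T a = T b"
    using \<open>inj L\<close> by (auto dest: injD)
  then have "L a = L b"
    using eq by simp
  then show "a = b"
    using \<open>inj L\<close> by (auto dest: injD)
qed

lemma inj_if_inj_add_kernel_valued:
  fixes T L G :: "'a::{ab_group_add,finite} \<Rightarrow> 'a"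
  assumes T: "additive T" and L: "additive L"
    and commute: "\<And>x. L (T x) = T (L x)" and kernel_valued: "\<And>w. T (G w) = 0"
    and "inj (\<lambda>x. G (T x) + L x)"
  shows "inj L"
proof (rule injI)
  define f where "f x = G (T x) + L x" for x
  have inj_f: "inj f"
    unfolding f_def[abs_def] by fact
  then have "range f = UNIV"
    by (simp add: finite_UNIV_inj_surj)
  have "L ` range T = T ` range f"
    by (simp add: image_image f_def additive.add[OF T] kernel_valued commute)
  also have "\<dots> = range T"
    using \<open>range f = UNIV\<close> by simp
  finally have inj_on_T: "inj_on L (range T)"
    by (intro eq_card_imp_inj_on) simp_all
  fix a b assume "L a = L b"
  define z where "z = a - b"
  have "L z = 0"
    using \<open>L a = L b\<close> by (simp add: z_def additive.diff[OF L])
  then have "L (T z) = L (T 0)"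
    by (simp add: commute additive.zero[OF T] additive.zero[OF L])
  then have "T z = T 0"
    by (rule inj_onD[OF inj_on_T]) auto
  then have "f z = f 0"
    using \<open>L z = 0\<close> by (simp add: f_def additive.zero[OF T] additive.zero[OF L])
  then have "z = 0"
    by (rule injD[OF inj_f])
  then show "a = b"
    by (simp add: z_def)
qed

text \<open>An additive analogue of the criterion of Akbary, Ghioca and Wang.\<close>
lemma inj_add_kernel_valued_iff:
  fixes T L G :: "'a::{ab_group_add,finite} \<Rightarrow> 'a"
  assumes "additive T" and "additive L"
    and "\<And>x. L (T x) = T (L x)" and "\<And>w. T (G w) = 0"
  shows "inj (\<lambda>x. G (T x) + L x) \<longleftrightarrow> inj L"
proof
  show "inj L" if "inj (\<lambda>x. G (T x) + L x)"
    using assms that by (rule inj_if_inj_add_kernel_valued)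
  show "inj (\<lambda>x. G (T x) + L x)" if "inj L"
    using assms(1) that assms(3,4) by (rule inj_add_kernel_valued_if_inj)
qed

lemma permutes_field_iff_inj:
  "permutes_field (f :: 'a::finite \<Rightarrow> 'a) \<longleftrightarrow> inj f"
  unfolding permutes_field_def bij_def by (auto simp: finite_UNIV_inj_surj)

theorem mainTheorem9:
  fixes q :: nat and h :: "'a::{field,finite} poly" and as :: "'a list" and \<delta> :: 'a
  assumes "prime_power q"
    and "card (UNIV :: 'a set) = q ^ 6"
    and "\<forall>c\<in>set as. c ^ q = c"
  shows "permutes_field (\<lambda>x. let w = x ^ (q^2) - x ^ q + x + \<delta>; y = poly h w in
            y ^ (q^4) + y ^ (q^3) - y ^ q - y + q_poly_eval q as x)
         \<longleftrightarrow> permutes_field (q_poly_eval q as)"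
proof -
  obtain k where "q = CHAR('a) ^ k"
    using CHAR_power_if_card_eq_prime_power assms(1,2) .
  with prime_CHAR_finite_field have frobenius: "additive (\<lambda>x::'a. x ^ (q ^ i))" for i
    by (rule additive_power_CHAR_power)
  define L where "L = q_poly_eval q as"
  have L: "additive L"
    unfolding L_def using frobenius by (rule additive_q_poly_eval)
  have "L (x ^ q) = L x ^ q" for x
    unfolding L_def using frobenius[of 1] assms(3) by (simp add: q_poly_eval_power_commute)
  then have commute: "L (lin_quad q x) = lin_quad q (L x)" for x
    by (rule lin_quad_commute[OF L])
  have annihilates: "lin_quad q (lin_quartic q y) = 0" for y :: 'a
    using finite_field_power_card[of y] assms(2) by (intro lin_quad_lin_quartic frobenius) simp
  have "inj (\<lambda>x. lin_quartic q (poly h (lin_quad q x + \<delta>)) + L x) \<longleftrightarrow> inj L"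
    using additive_lin_quad[OF frobenius] L commute annihilates by (rule inj_add_kernel_valued_iff)
  then show ?thesis
    by (simp add: permutes_field_iff_inj L_def lin_quad_def lin_quartic_def Let_def)
qed

end
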